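(* Let $q$ be an odd prime power, let $a,b\in\mathbb{F}_q$ with $b\ne0$, and let $n\ge2$ be an integer with $\gcd(n+1,q)=1$. Then $\hat C_n(a,b)$ is LCD if and only if $$a/b\notin\{-\mu/b+\theta^i+\theta^{-i} : 1\le i\le n\}\cup\{\mu/b+\theta^i+\theta^{-i} : 1\le i\le n\},$$ where $\mu\in\mathbb{F}_{q^2}$ satisfies $\mu^2=-1$ and $\theta\in\overline{\mathbb{F}}_q$ is a primitive $2(n+1)$-th root of unity.
   Context: For $a,b\in\mathbb{F}_q$ and $n\ge 2$, $\hat T_n(a,b)$ denotes the $n\times n$ symmetric tridiagonal Toeplitz matrix over $\mathbb{F}_q$ with all diagonal entries equal to $a$, all entries on the first super- and sub-diagonals equal to $b$, and all other entries $0$. $\hat C_n(a,b)$ is the $[2n,n]$ linear code over $\mathbb{F}_q$ with generator matrix $[I_n\mid \hat T_n(a,b)]$. A linear code $C$ is LCD if $C\cap C^\perp=\{0\}$ (Euclidean dual). *)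

theory Defs
  imports Main "HOL-Library.Cardinality"
begin

text \<open>Vectors of length m over a field are modelled as functions nat \<Rightarrow> 'a
  vanishing outside the index range {0..<m}.\<close>

definition vecs :: "nat \<Rightarrow> (nat \<Rightarrow> 'a::zero) set" where
  "vecs m = {v. \<forall>i\<ge>m. v i = 0}"

definition tridiag_toeplitz :: "nat \<Rightarrow> 'a::zero \<Rightarrow> 'a \<Rightarrow> nat \<Rightarrow> nat \<Rightarrow> 'a" where
  "tridiag_toeplitz n a b i j =
     (if i < n \<and> j < n then
        (if i = j then a else if i = j + 1 \<or> j = i + 1 then b else 0)
      else 0)"

definition gen_matrix :: "nat \<Rightarrow> 'a::{zero,one} \<Rightarrow> 'a \<Rightarrow> nat \<Rightarrow> nat \<Rightarrow> 'a" where
  "gen_matrix n a b i j =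
     (if i < n \<and> j < 2 * n then
        (if j < n then (if i = j then 1 else 0) else tridiag_toeplitz n a b i (j - n))
      else 0)"

definition row_code :: "nat \<Rightarrow> nat \<Rightarrow> (nat \<Rightarrow> nat \<Rightarrow> 'a::comm_ring_1) \<Rightarrow> (nat \<Rightarrow> 'a) set" where
  "row_code k m G = {(\<lambda>j. if j < m then (\<Sum>i<k. u i * G i j) else 0) | u. u \<in> vecs k}"

definition tt_code :: "nat \<Rightarrow> 'a::comm_ring_1 \<Rightarrow> 'a \<Rightarrow> (nat \<Rightarrow> 'a) set" where
  "tt_code n a b = row_code n (2 * n) (gen_matrix n a b)"

definition euclid_dual :: "nat \<Rightarrow> (nat \<Rightarrow> 'a::comm_ring_1) set \<Rightarrow> (nat \<Rightarrow> 'a) set" where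
  "euclid_dual m C = {v \<in> vecs m. \<forall>c\<in>C. (\<Sum>j<m. v j * c j) = 0}"

definition is_LCD :: "nat \<Rightarrow> (nat \<Rightarrow> 'a::comm_ring_1) set \<Rightarrow> bool" where
  "is_LCD m C \<longleftrightarrow> C \<inter> euclid_dual m C = {(\<lambda>_. 0)}"

definition field_embedding :: "('a::field \<Rightarrow> 'b::field) \<Rightarrow> bool" where
  "field_embedding \<phi> \<longleftrightarrow> (\<forall>x y. \<phi> (x + y) = \<phi> x + \<phi> y) \<and> (\<forall>x y. \<phi> (x * y) = \<phi> x * \<phi> y) \<and> \<phi> 1 = 1"

definition primitive_root_of_unity :: "nat \<Rightarrow> 'a::field \<Rightarrow> bool" where
  "primitive_root_of_unity k \<theta> \<longleftrightarrow> \<theta> ^ k = 1 \<and> (\<forall>j. 0 < j \<and> j < k \<longrightarrow> \<theta> ^ j \<noteq> 1)"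

end

theory Submission
  imports Defs "HOL-Computational_Algebra.Polynomial" "HOL-Library.Product_Plus"
begin

text \<open>
  Since the generator matrix is [I | T] with T symmetric, the code is LCD iff I + T^2 is
  nonsingular. Writing i for a square root of -1, a vector u lies in the kernel of I + T^2 iff
  z_k = u_k + i (T u)_k satisfies the three-term recurrence z_(k+1) = c z_k - z_(k-1) with
  c = -(a + i)/b and z_n = 0; hence z_k = U_k(c) z_0 for the Chebyshev polynomials U_k, and a
  nonzero kernel vector exists iff the norm of U_n(c) vanishes. In an extension field containing
  mu this norm factors as U_n((-a - mu)/b) U_n((-a + mu)/b), and the roots of U_n are the n
  distinct numbers theta^j + theta^(-j), a set closed under negation.
\<close>

definition toeplitz_mult :: "nat \<Rightarrow> 'a::comm_ring_1 \<Rightarrow> 'a \<Rightarrow> (nat \<Rightarrow> 'a) \<Rightarrow> nat \<Rightarrow> 'a" where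
  "toeplitz_mult n a b u k = (\<Sum>j<n. tridiag_toeplitz n a b k j * u j)"

lemma tridiag_toeplitz_sym: "tridiag_toeplitz n a b i j = tridiag_toeplitz n a b j i"
  unfolding tridiag_toeplitz_def by auto

lemma toeplitz_mult_in_vecs: "toeplitz_mult n a b u \<in> vecs n"
  unfolding vecs_def toeplitz_mult_def tridiag_toeplitz_def by auto

lemma toeplitz_mult_three_term:
  assumes u: "u \<in> vecs n" and k: "k < n"
  shows "toeplitz_mult n a b u k = a * u k + b * u (Suc k) + (if k = 0 then 0 else b * u (k - 1))"
proof -
  have "toeplitz_mult n a b u k = (\<Sum>j<n. (if j = k then a * u j else 0) + (if j = Suc k then b * u j else 0)
      + (if j = k - 1 \<and> k > 0 then b * u j else 0))"
    unfolding toeplitz_mult_def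
    by (rule sum.cong) (use k in \<open>auto simp: tridiag_toeplitz_def\<close>)
  also have "\<dots> = a * u k + (if Suc k < n then b * u (Suc k) else 0) + (if k > 0 then b * u (k - 1) else 0)"
    using k by (simp add: sum.distrib sum.delta)
  also have "\<dots> = a * u k + b * u (Suc k) + (if k = 0 then 0 else b * u (k - 1))"
    using u unfolding vecs_def by auto
  finally show ?thesis .
qed

lemma toeplitz_mult_self_adjoint:
  "(\<Sum>j<n. toeplitz_mult n a b x j * y j) = (\<Sum>j<n. x j * toeplitz_mult n a b y j)"
proof -
  have "(\<Sum>j<n. toeplitz_mult n a b x j * y j) = (\<Sum>j<n. \<Sum>i<n. tridiag_toeplitz n a b j i * x i * y j)"
    unfolding toeplitz_mult_def by (simp add: sum_distrib_right)
  also have "\<dots> = (\<Sum>i<n. \<Sum>j<n. tridiag_toeplitz n a b j i * x i * y j)"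
    by (rule sum.swap)
  also have "\<dots> = (\<Sum>i<n. x i * toeplitz_mult n a b y i)"
    unfolding toeplitz_mult_def by (simp add: sum_distrib_left tridiag_toeplitz_sym mult_ac)
  finally show ?thesis .
qed

definition tt_codeword :: "nat \<Rightarrow> 'a::comm_ring_1 \<Rightarrow> 'a \<Rightarrow> (nat \<Rightarrow> 'a) \<Rightarrow> nat \<Rightarrow> 'a" where
  "tt_codeword n a b u j =
     (if j < n then u j else if j < 2 * n then toeplitz_mult n a b u (j - n) else 0)"

lemma tt_code_eq_image: "tt_code n a b = tt_codeword n a b ` vecs n"
proof -
  have "(\<lambda>j. if j < 2 * n then (\<Sum>i<n. u i * gen_matrix n a b i j) else 0) = tt_codeword n a b u" for u
  proof
    fix j
    show "(if j < 2 * n then (\<Sum>i<n. u i * gen_matrix n a b i j) else 0) = tt_codeword n a b u j"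
    proof (cases "j < n")
      case True
      then show ?thesis unfolding tt_codeword_def gen_matrix_def
        by (simp add: if_distrib[of "\<lambda>x. _ * x"] sum.delta cong: if_cong)
    next
      case False
      then show ?thesis unfolding tt_codeword_def gen_matrix_def toeplitz_mult_def
        by (auto intro!: sum.cong simp: tridiag_toeplitz_sym mult.commute)
    qed
  qed
  then show ?thesis unfolding tt_code_def row_code_def by auto
qed

lemma tt_codeword_in_vecs: "tt_codeword n a b u \<in> vecs (2 * n)"
  unfolding vecs_def tt_codeword_def by auto

lemma tt_codeword_eq_0_iff:
  assumes "u \<in> vecs n"
  shows "tt_codeword n a b u = (\<lambda>_. 0) \<longleftrightarrow> u = (\<lambda>_. 0)"
proof
  assume c: "tt_codeword n a b u = (\<lambda>_. 0)"
  show "u = (\<lambda>_. 0)"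
  proof
    fix j show "u j = 0"
      using fun_cong[OF c, of j] assms unfolding tt_codeword_def vecs_def by (cases "j < n") auto
  qed
qed (simp add: tt_codeword_def toeplitz_mult_def fun_eq_iff)

lemma tt_codeword_inner:
  "(\<Sum>j<2 * n. tt_codeword n a b u j * tt_codeword n a b v j) =
     (\<Sum>j<n. (u j + toeplitz_mult n a b (toeplitz_mult n a b u) j) * v j)"
proof -
  let ?T = "toeplitz_mult n a b" and ?c = "tt_codeword n a b"
  have split: "{..<2 * n} = {..<n} \<union> {n..<2 * n}" by auto
  have "(\<Sum>j<2 * n. ?c u j * ?c v j) = (\<Sum>j<n. ?c u j * ?c v j) + (\<Sum>j\<in>{n..<2 * n}. ?c u j * ?c v j)"
    unfolding split by (rule sum.union_disjoint) auto
  also have "(\<Sum>j<n. ?c u j * ?c v j) = (\<Sum>j<n. u j * v j)"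
    unfolding tt_codeword_def by simp
  also have "(\<Sum>j\<in>{n..<2 * n}. ?c u j * ?c v j) = (\<Sum>j\<in>{0 + n..<n + n}. ?T u (j - n) * ?T v (j - n))"
    unfolding tt_codeword_def by (intro sum.cong) auto
  also have "\<dots> = (\<Sum>j<n. ?T u j * ?T v j)"
    unfolding sum.shift_bounds_nat_ivl by (simp add: lessThan_atLeast0)
  also have "\<dots> = (\<Sum>j<n. ?T (?T u) j * v j)"
    by (rule toeplitz_mult_self_adjoint[symmetric])
  finally show ?thesis by (simp add: sum.distrib distrib_right)
qed

lemma orthogonal_to_vecs_iff:
  fixes g :: "nat \<Rightarrow> 'a::comm_ring_1"
  shows "(\<forall>v\<in>vecs n. (\<Sum>j<n. g j * v j) = 0) \<longleftrightarrow> (\<forall>k<n. g k = 0)"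
proof
  assume h: "\<forall>v\<in>vecs n. (\<Sum>j<n. g j * v j) = 0"
  show "\<forall>k<n. g k = 0"
  proof (intro allI impI)
    fix k assume k: "k < n"
    have "(\<lambda>j. if j = k then 1 else 0) \<in> vecs n" using k unfolding vecs_def by auto
    from h[rule_format, OF this] show "g k = 0" using k
      by (simp add: if_distrib[of "\<lambda>x. _ * x"] sum.delta cong: if_cong)
  qed
qed simp

lemma is_LCD_tt_code_iff:
  "is_LCD (2 * n) (tt_code n a b) \<longleftrightarrow>
     \<not> (\<exists>u\<in>vecs n. u \<noteq> (\<lambda>_. 0) \<and>
          (\<forall>k<n. u k + toeplitz_mult n a b (toeplitz_mult n a b u) k = 0))"
proof -
  let ?C = "tt_code n a b" and ?c = "tt_codeword n a b"
  have dual_iff: "?c u \<in> euclid_dual (2 * n) ?C \<longleftrightarrow>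
      (\<forall>k<n. u k + toeplitz_mult n a b (toeplitz_mult n a b u) k = 0)" if "u \<in> vecs n" for u
  proof -
    have "?c u \<in> euclid_dual (2 * n) ?C \<longleftrightarrow> (\<forall>v\<in>vecs n. (\<Sum>j<2 * n. ?c u j * ?c v j) = 0)"
      unfolding euclid_dual_def tt_code_eq_image using tt_codeword_in_vecs by blast
    also have "\<dots> \<longleftrightarrow>
        (\<forall>v\<in>vecs n. (\<Sum>j<n. (u j + toeplitz_mult n a b (toeplitz_mult n a b u) j) * v j) = 0)"
      by (simp only: tt_codeword_inner)
    finally have "?c u \<in> euclid_dual (2 * n) ?C \<longleftrightarrow>
        (\<forall>v\<in>vecs n. (\<Sum>j<n. (u j + toeplitz_mult n a b (toeplitz_mult n a b u) j) * v j) = 0)" .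
    then show ?thesis using orthogonal_to_vecs_iff by auto
  qed
  have zero_vec: "(\<lambda>_. 0) \<in> vecs n" unfolding vecs_def by simp
  then have "(\<lambda>_. 0) \<in> ?C" unfolding tt_code_eq_image
    by (rule rev_image_eqI) (simp add: tt_codeword_def toeplitz_mult_def fun_eq_iff)
  moreover have "(\<lambda>_. 0) \<in> euclid_dual (2 * n) ?C" unfolding euclid_dual_def vecs_def by simp
  ultimately have "is_LCD (2 * n) ?C \<longleftrightarrow> (\<forall>c\<in>?C. c \<in> euclid_dual (2 * n) ?C \<longrightarrow> c = (\<lambda>_. 0))"
    unfolding is_LCD_def by blast
  also have "\<dots> \<longleftrightarrow> (\<forall>u\<in>vecs n. ?c u \<in> euclid_dual (2 * n) ?C \<longrightarrow> ?c u = (\<lambda>_. 0))"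
    unfolding tt_code_eq_image by blast
  also have "\<dots> \<longleftrightarrow> (\<forall>u\<in>vecs n.
      (\<forall>k<n. u k + toeplitz_mult n a b (toeplitz_mult n a b u) k = 0) \<longrightarrow> u = (\<lambda>_. 0))"
    by (intro ball_cong refl) (simp add: dual_iff tt_codeword_eq_0_iff)
  finally show ?thesis by blast
qed

text \<open>A pair (x, y) stands for x + i y with i^2 = -1, without assuming that -1 is a non-square.\<close>

definition gauss_mult :: "'a::comm_ring_1 \<times> 'a \<Rightarrow> 'a \<times> 'a \<Rightarrow> 'a \<times> 'a" where
  "gauss_mult x y = (fst x * fst y - snd x * snd y, fst x * snd y + snd x * fst y)"

definition gauss_norm :: "'a::comm_ring_1 \<times> 'a \<Rightarrow> 'a" where
  "gauss_norm x = fst x ^ 2 + snd x ^ 2"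

fun gauss_cheb :: "'a::comm_ring_1 \<times> 'a \<Rightarrow> nat \<Rightarrow> 'a \<times> 'a" where
  "gauss_cheb c 0 = (1, 0)"
| "gauss_cheb c (Suc 0) = c"
| "gauss_cheb c (Suc (Suc k)) = gauss_mult c (gauss_cheb c (Suc k)) - gauss_cheb c k"

lemma gauss_norm_eq_0_iff:
  fixes x :: "'a::field \<times> 'a"
  shows "gauss_norm x = 0 \<longleftrightarrow> (\<exists>y. y \<noteq> 0 \<and> gauss_mult x y = 0)"
proof
  obtain p q where x: "x = (p, q)" by fastforce
  assume "gauss_norm x = 0"
  then have "p * q - q * p = 0" "p * p + q * q = 0"
    by (simp_all add: x gauss_norm_def power2_eq_square)
  then have "gauss_mult x (if x = 0 then (1, 0) else (q, p)) = 0"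
    by (simp add: x gauss_mult_def zero_prod_def)
  moreover have "(if x = 0 then (1, 0) else (q, p)) \<noteq> (0 :: 'a \<times> 'a)"
    unfolding x zero_prod_def by auto
  ultimately show "\<exists>y. y \<noteq> 0 \<and> gauss_mult x y = 0" by blast
next
  assume "\<exists>y. y \<noteq> 0 \<and> gauss_mult x y = 0"
  then obtain s t where y: "(s, t) \<noteq> 0" "gauss_mult x (s, t) = 0" by fastforce
  obtain p q where x: "x = (p, q)" by fastforce
  have e1: "p * s - q * t = 0" and e2: "p * t + q * s = 0"
    using y(2) by (simp_all add: x gauss_mult_def zero_prod_def)
  have "(p\<^sup>2 + q\<^sup>2) * s = p * (p * s - q * t) + q * (p * t + q * s)"
    and "(p\<^sup>2 + q\<^sup>2) * t = p * (p * t + q * s) - q * (p * s - q * t)"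
    by (simp_all add: algebra_simps power2_eq_square)
  then have "(p\<^sup>2 + q\<^sup>2) * s = 0" "(p\<^sup>2 + q\<^sup>2) * t = 0"
    using e1 e2 by simp_all
  then show "gauss_norm x = 0"
    using y(1) by (auto simp: x gauss_norm_def zero_prod_def)
qed

lemma gauss_cheb_recurrence_solution:
  assumes "\<forall>k<n. P (Suc k) = gauss_mult c (P k) - (if k = 0 then 0 else P (k - 1))"
  shows "k \<le> n \<Longrightarrow> P k = gauss_mult (gauss_cheb c k) (P 0)"
proof (induction k rule: induct_nat_012)
  case 0
  then show ?case by (simp add: gauss_mult_def)
next
  case 1
  then show ?case using assms[rule_format, of 0] by (simp add: gauss_mult_def)
next
  case (ge2 k)
  have "P (Suc (Suc k)) = gauss_mult c (P (Suc k)) - P k"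
    using assms[rule_format, of "Suc k"] ge2.prems by simp
  then show ?case using ge2 by (simp add: gauss_mult_def algebra_simps)
qed


lemma gauss_cheb_mult_recurrence:
  "gauss_mult (gauss_cheb c (Suc k)) y =
     gauss_mult c (gauss_mult (gauss_cheb c k) y) - (if k = 0 then 0 else gauss_mult (gauss_cheb c (k - 1)) y)"
  by (cases k) (simp_all add: gauss_mult_def zero_prod_def algebra_simps)

lemma toeplitz_equations_iff_gauss_step:
  fixes a b :: "'a::field"
  assumes u: "u \<in> vecs n" and w: "w \<in> vecs n" and b: "b \<noteq> 0" and k: "k < n"
  shows "w k = toeplitz_mult n a b u k \<and> - u k = toeplitz_mult n a b w k \<longleftrightarrow>
    (u (Suc k), w (Suc k)) =
      gauss_mult (- a / b, - 1 / b) (u k, w k) - (if k = 0 then 0 else (u (k - 1), w (k - 1)))"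
proof -
  define u' w' where "u' = (if k = 0 then 0 else u (k - 1))" and "w' = (if k = 0 then 0 else w (k - 1))"
  have "toeplitz_mult n a b u k = a * u k + b * u (Suc k) + b * u'"
    and "toeplitz_mult n a b w k = a * w k + b * w (Suc k) + b * w'"
    unfolding toeplitz_mult_three_term[OF u k] toeplitz_mult_three_term[OF w k] u'_def w'_def by simp_all
  then have "w k = toeplitz_mult n a b u k \<longleftrightarrow> u (Suc k) = - a / b * u k + w k / b - u'"
    and "- u k = toeplitz_mult n a b w k \<longleftrightarrow> w (Suc k) = - a / b * w k - u k / b - w'"
    using b by (auto simp: field_simps) (simp_all add: eq_neg_iff_add_eq_0 neg_eq_iff_add_eq_0 algebra_simps)
  moreover have "(if k = 0 then 0 else (u (k - 1), w (k - 1))) = (u', w')"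
    by (simp add: u'_def w'_def zero_prod_def)
  ultimately show ?thesis by (auto simp: gauss_mult_def)
qed

lemma toeplitz_kernel_imp_gauss_norm_eq_0:
  fixes a b :: "'a::field"
  assumes b: "b \<noteq> 0" and u: "u \<in> vecs n" and u_nz: "u \<noteq> (\<lambda>_. 0)"
    and ker: "\<forall>k<n. u k + toeplitz_mult n a b (toeplitz_mult n a b u) k = 0"
  shows "gauss_norm (gauss_cheb (- a / b, - 1 / b) n) = 0"
proof -
  define w where "w = toeplitz_mult n a b u"
  have w: "w \<in> vecs n" unfolding w_def by (rule toeplitz_mult_in_vecs)
  define P where "P k = (u k, w k)" for k
  have "\<forall>k<n. P (Suc k) = gauss_mult (- a / b, - 1 / b) (P k) - (if k = 0 then 0 else P (k - 1))"
  proof (intro allI impI)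
    fix k assume k: "k < n"
    have "w k = toeplitz_mult n a b u k \<and> - u k = toeplitz_mult n a b w k"
      using ker k unfolding w_def by (simp add: neg_eq_iff_add_eq_0)
    then show "P (Suc k) = gauss_mult (- a / b, - 1 / b) (P k) - (if k = 0 then 0 else P (k - 1))"
      using toeplitz_equations_iff_gauss_step[OF u w b k] unfolding P_def by simp
  qed
  then have P_eq: "P k = gauss_mult (gauss_cheb (- a / b, - 1 / b) k) (P 0)" if "k \<le> n" for k
    using gauss_cheb_recurrence_solution that by blast
  have "P n = 0" using u w unfolding P_def vecs_def zero_prod_def by simp
  moreover have "P 0 \<noteq> 0"
  proof
    assume "P 0 = 0"
    then have "u k = 0" for k
      using P_eq[of k] u unfolding P_def vecs_def by (cases "k \<le> n") (auto simp: gauss_mult_def)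
    then show False using u_nz by auto
  qed
  ultimately have "P 0 \<noteq> 0 \<and> gauss_mult (gauss_cheb (- a / b, - 1 / b) n) (P 0) = 0"
    using P_eq[of n] by simp
  then show ?thesis using gauss_norm_eq_0_iff by blast
qed

lemma gauss_norm_eq_0_imp_toeplitz_kernel:
  fixes a b :: "'a::field"
  assumes b: "b \<noteq> 0" and n: "0 < n" and norm: "gauss_norm (gauss_cheb (- a / b, - 1 / b) n) = 0"
  shows "\<exists>u\<in>vecs n. u \<noteq> (\<lambda>_. 0) \<and> (\<forall>k<n. u k + toeplitz_mult n a b (toeplitz_mult n a b u) k = 0)"
proof -
  let ?c = "(- a / b, - 1 / b)"
  obtain y where y: "y \<noteq> 0" "gauss_mult (gauss_cheb ?c n) y = 0"
    using norm gauss_norm_eq_0_iff by blast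
  define P where "P k = gauss_mult (gauss_cheb ?c k) y" for k
  define u w where "u k = (if k < n then fst (P k) else 0)" and "w k = (if k < n then snd (P k) else 0)" for k
  have u: "u \<in> vecs n" and w: "w \<in> vecs n" unfolding vecs_def u_def w_def by auto
  have uw_P: "(u k, w k) = P k" if "k \<le> n" for k
    using that y(2) unfolding u_def w_def P_def by (cases "k = n") (auto simp: zero_prod_def)
  have step: "w k = toeplitz_mult n a b u k \<and> - u k = toeplitz_mult n a b w k" if k: "k < n" for k
    using toeplitz_equations_iff_gauss_step[OF u w b k] gauss_cheb_mult_recurrence[of ?c k y] k
    by (simp add: uw_P P_def)
  have Tu: "toeplitz_mult n a b u = w"
  proof
    fix k show "toeplitz_mult n a b u k = w k"
      using step[of k] toeplitz_mult_in_vecs[of n a b u] w unfolding vecs_def by (cases "k < n") auto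
  qed
  have "u \<noteq> (\<lambda>_. 0)"
  proof
    assume "u = (\<lambda>_. 0)"
    then have "w = (\<lambda>_. 0)" using Tu unfolding toeplitz_mult_def by auto
    then have "P 0 = 0" using uw_P[of 0] \<open>u = (\<lambda>_. 0)\<close> by (simp add: zero_prod_def)
    then show False using y(1) unfolding P_def by (simp add: gauss_mult_def)
  qed
  moreover have "\<forall>k<n. u k + toeplitz_mult n a b (toeplitz_mult n a b u) k = 0"
    using step by (simp add: Tu neg_eq_iff_add_eq_0)
  ultimately show ?thesis using u by blast
qed

lemma toeplitz_kernel_iff_gauss_norm_eq_0:
  fixes a b :: "'a::field"
  assumes "b \<noteq> 0" and "0 < n"
  shows "(\<exists>u\<in>vecs n. u \<noteq> (\<lambda>_. 0) \<and> (\<forall>k<n. u k + toeplitz_mult n a b (toeplitz_mult n a b u) k = 0))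
    \<longleftrightarrow> gauss_norm (gauss_cheb (- a / b, - 1 / b) n) = 0"
  using toeplitz_kernel_imp_gauss_norm_eq_0[OF assms(1)] gauss_norm_eq_0_imp_toeplitz_kernel[OF assms]
  by blast

text \<open>Chebyshev polynomials of the second kind in the variable 2 cos t: U_k(X/2) in the usual notation.\<close>

fun cheb_poly :: "nat \<Rightarrow> 'a::comm_ring_1 poly" where
  "cheb_poly 0 = 1"
| "cheb_poly (Suc 0) = [:0, 1:]"
| "cheb_poly (Suc (Suc k)) = pCons 0 (cheb_poly (Suc k)) - cheb_poly k"

lemma degree_cheb_poly: "degree (cheb_poly k :: 'a::comm_ring_1 poly) = k"
proof (induction k rule: cheb_poly.induct)
  case (3 k)
  then have "cheb_poly (Suc k) \<noteq> (0 :: 'a poly)" by (intro notI) simp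
  then have lead: "degree (pCons 0 (cheb_poly (Suc k) :: 'a poly)) = Suc (Suc k)"
    using 3 by simp
  have "degree (- cheb_poly k :: 'a poly) < degree (pCons 0 (cheb_poly (Suc k) :: 'a poly))"
    unfolding degree_minus lead using 3 by simp
  then have "degree (pCons 0 (cheb_poly (Suc k)) + - cheb_poly k :: 'a poly) = Suc (Suc k)"
    unfolding lead[symmetric] by (rule degree_add_eq_left)
  then show ?case unfolding cheb_poly.simps diff_conv_add_uminus .
qed simp_all

lemma cheb_poly_nonzero: "cheb_poly k \<noteq> (0 :: 'a::comm_ring_1 poly)"
proof (cases k)
  case (Suc m)
  then show ?thesis using degree_cheb_poly[of k, where 'a='a] by (intro notI) simp
qed simp

lemma poly_cheb_poly_add_inverse:
  fixes y :: "'a::field"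
  assumes y: "y \<noteq> 0"
  shows "poly (cheb_poly k) (y + inverse y) * (y - inverse y) = y ^ Suc k - inverse y ^ Suc k"
proof (induction k rule: cheb_poly.induct)
  case 2
  show ?case by (simp add: ring_distribs power2_eq_square)
next
  case (3 k)
  let ?U = "\<lambda>j. poly (cheb_poly j) (y + inverse y)"
  have "?U (Suc (Suc k)) * (y - inverse y) =
      (y + inverse y) * (?U (Suc k) * (y - inverse y)) - ?U k * (y - inverse y)"
    by (simp add: algebra_simps)
  also have "\<dots> = (y + inverse y) * (y ^ Suc (Suc k) - inverse y ^ Suc (Suc k)) - (y ^ Suc k - inverse y ^ Suc k)"
    using 3 by simp
  also have "\<dots> = y ^ Suc (Suc (Suc k)) - inverse y ^ Suc (Suc (Suc k))
      + (y * inverse y - 1) * (y ^ Suc k - inverse y ^ Suc k)"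
    by (simp add: ring_distribs mult_ac)
  also have "\<dots> = y ^ Suc (Suc (Suc k)) - inverse y ^ Suc (Suc (Suc k))"
    using y by simp
  finally show ?case .
qed simp

lemma primitive_root_of_unity_nonzero:
  "primitive_root_of_unity k \<theta> \<Longrightarrow> 0 < k \<Longrightarrow> \<theta> \<noteq> 0"
  unfolding primitive_root_of_unity_def by (auto simp: power_0_left)

lemma primitive_root_of_unity_power_half:
  fixes \<theta> :: "'a::field"
  assumes \<theta>: "primitive_root_of_unity (2 * m) \<theta>" and m: "0 < m"
  shows "\<theta> ^ m = -1"
proof -
  have "(\<theta> ^ m)\<^sup>2 = 1"
    using \<theta> unfolding primitive_root_of_unity_def by (simp add: power_mult[symmetric] mult.commute)
  moreover have "\<theta> ^ m \<noteq> 1"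
    using \<theta> m unfolding primitive_root_of_unity_def by simp
  ultimately show ?thesis by (simp add: power2_eq_1_iff)
qed

lemma cheb_poly_root_of_unity:
  fixes \<theta> :: "'a::field"
  assumes \<theta>: "primitive_root_of_unity (2 * (n + 1)) \<theta>" and i: "1 \<le> i" "i \<le> n"
  shows "poly (cheb_poly n) (\<theta> ^ i + inverse (\<theta> ^ i)) = 0"
proof -
  define y where "y = \<theta> ^ i"
  have y: "y \<noteq> 0" unfolding y_def using primitive_root_of_unity_nonzero[OF \<theta>] by simp
  have "y ^ Suc n = (\<theta> ^ Suc n) ^ i"
    unfolding y_def by (simp only: power_mult[symmetric] mult.commute)
  then have "y ^ Suc n = (-1) ^ i"
    using primitive_root_of_unity_power_half[OF \<theta>] by simp
  moreover have "inverse ((- 1) ^ i) = ((- 1) ^ i :: 'a)"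
    by (simp add: power_inverse[symmetric])
  ultimately have "y ^ Suc n - inverse y ^ Suc n = 0"
    by (simp only: power_inverse diff_self)
  moreover have "y - inverse y \<noteq> 0"
  proof
    assume "y - inverse y = 0"
    then have "y * y = y * inverse y" by (simp add: right_minus_eq)
    then have "y * y = 1" using y by simp
    then have "\<theta> ^ (2 * i) = 1" unfolding y_def by (simp add: mult_2 power_add)
    then show False using \<theta> i unfolding primitive_root_of_unity_def by simp
  qed
  ultimately show ?thesis
    using poly_cheb_poly_add_inverse[OF y, of n] unfolding y_def by simp
qed

lemma inj_on_power_add_inverse:
  fixes \<theta> :: "'a::field"
  assumes \<theta>: "primitive_root_of_unity (2 * (n + 1)) \<theta>"
  shows "inj_on (\<lambda>i. \<theta> ^ i + inverse (\<theta> ^ i)) {1..n}"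
proof (rule linorder_inj_onI')
  fix i j assume i: "i \<in> {1..n}" and j: "j \<in> {1..n}" and ij: "i < j"
  have t: "\<theta> ^ i \<noteq> 0" "\<theta> ^ j \<noteq> 0" using primitive_root_of_unity_nonzero[OF \<theta>] by simp_all
  have "(\<theta> ^ i + inverse (\<theta> ^ i)) - (\<theta> ^ j + inverse (\<theta> ^ j)) =
      (\<theta> ^ i - \<theta> ^ j) * (1 - inverse (\<theta> ^ i * \<theta> ^ j))"
    using t by (simp add: field_simps)
  moreover have "\<theta> ^ i - \<theta> ^ j \<noteq> 0"
  proof
    assume "\<theta> ^ i - \<theta> ^ j = 0"
    moreover have "\<theta> ^ i * \<theta> ^ (j - i) = \<theta> ^ j"
      using ij by (simp flip: power_add)
    ultimately have "\<theta> ^ i * \<theta> ^ (j - i) = \<theta> ^ i * 1" by simp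
    then have "\<theta> ^ (j - i) = 1" using t(1) mult_left_cancel by blast
    then show False using \<theta> i j ij unfolding primitive_root_of_unity_def by auto
  qed
  moreover have "1 - inverse (\<theta> ^ i * \<theta> ^ j) \<noteq> 0"
  proof
    assume "1 - inverse (\<theta> ^ i * \<theta> ^ j) = 0"
    then have "\<theta> ^ (i + j) = 1" using t by (simp add: power_add field_simps)
    then show False using \<theta> i j unfolding primitive_root_of_unity_def by auto
  qed
  ultimately show "\<theta> ^ i + inverse (\<theta> ^ i) \<noteq> \<theta> ^ j + inverse (\<theta> ^ j)" by auto
qed

text \<open>n distinct roots of a polynomial of degree n are all of its roots.\<close>
lemma cheb_poly_roots:
  fixes \<theta> :: "'a::field"
  assumes \<theta>: "primitive_root_of_unity (2 * (n + 1)) \<theta>"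
  shows "{x. poly (cheb_poly n) x = 0} = (\<lambda>i. \<theta> ^ i + inverse (\<theta> ^ i)) ` {1..n}"
proof -
  let ?R = "(\<lambda>i. \<theta> ^ i + inverse (\<theta> ^ i)) ` {1..n}"
  have sub: "?R \<subseteq> {x. poly (cheb_poly n) x = 0}"
    using cheb_poly_root_of_unity[OF \<theta>] by auto
  have "card {x. poly (cheb_poly n) x = (0 :: 'a)} \<le> card ?R"
    using card_poly_roots_bound[OF cheb_poly_nonzero[where 'a='a], of n]
      card_image[OF inj_on_power_add_inverse[OF \<theta>]] by (simp add: degree_cheb_poly)
  then show ?thesis
    using card_seteq[OF poly_roots_finite[OF cheb_poly_nonzero[where 'a='a]] sub] by blast
qed

lemma uminus_power_add_inverse_mem:
  fixes \<theta> :: "'a::field"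
  assumes \<theta>: "primitive_root_of_unity (2 * (n + 1)) \<theta>"
    and x: "x \<in> (\<lambda>i. \<theta> ^ i + inverse (\<theta> ^ i)) ` {1..n}"
  shows "- x \<in> (\<lambda>i. \<theta> ^ i + inverse (\<theta> ^ i)) ` {1..n}"
proof -
  obtain i where i: "i \<in> {1..n}" and xi: "x = \<theta> ^ i + inverse (\<theta> ^ i)" using x by blast
  have t: "\<theta> ^ i \<noteq> 0" "\<theta> ^ (n + 1 - i) \<noteq> 0"
    using primitive_root_of_unity_nonzero[OF \<theta>] by simp_all
  have "\<theta> ^ (n + 1 - i) * \<theta> ^ i = -1"
    using i primitive_root_of_unity_power_half[OF \<theta>] by (simp add: power_add[symmetric])
  then have "\<theta> ^ (n + 1 - i) = - inverse (\<theta> ^ i)" and "inverse (\<theta> ^ (n + 1 - i)) = - (\<theta> ^ i)"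
    using t by (simp_all add: field_simps)
  then have "- x = \<theta> ^ (n + 1 - i) + inverse (\<theta> ^ (n + 1 - i))" unfolding xi by simp
  moreover have "n + 1 - i \<in> {1..n}" using i by auto
  ultimately show ?thesis by blast
qed

lemma poly_cheb_poly_eq_0_iff_uminus_mem:
  fixes \<theta> :: "'a::field"
  assumes \<theta>: "primitive_root_of_unity (2 * (n + 1)) \<theta>"
  shows "poly (cheb_poly n) x = 0 \<longleftrightarrow> - x \<in> (\<lambda>i. \<theta> ^ i + inverse (\<theta> ^ i)) ` {1..n}"
proof -
  have "poly (cheb_poly n) x = 0 \<longleftrightarrow> x \<in> (\<lambda>i. \<theta> ^ i + inverse (\<theta> ^ i)) ` {1..n}"
    using cheb_poly_roots[OF \<theta>] by blast
  then show ?thesis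
    using uminus_power_add_inverse_mem[OF \<theta>, of x] uminus_power_add_inverse_mem[OF \<theta>, of "- x"] by auto
qed

lemma field_embedding_hom:
  fixes \<phi> :: "'a::field \<Rightarrow> 'b::field"
  assumes "field_embedding \<phi>"
  shows "\<phi> (x + y) = \<phi> x + \<phi> y" and "\<phi> (x * y) = \<phi> x * \<phi> y" and "\<phi> 1 = 1"
    and "\<phi> 0 = 0" and "\<phi> (- x) = - \<phi> x" and "\<phi> (x - y) = \<phi> x - \<phi> y"
    and "\<phi> (inverse x) = inverse (\<phi> x)" and "\<phi> (x / y) = \<phi> x / \<phi> y"
proof -
  have add: "\<phi> (x + y) = \<phi> x + \<phi> y" and mult: "\<phi> (x * y) = \<phi> x * \<phi> y" for x y
    using assms unfolding field_embedding_def by auto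
  show "\<phi> (x + y) = \<phi> x + \<phi> y" "\<phi> (x * y) = \<phi> x * \<phi> y" by (fact add mult)+
  show one: "\<phi> 1 = 1" using assms unfolding field_embedding_def by auto
  have "\<phi> 0 + \<phi> 0 = \<phi> 0 + 0" using add[of 0 0] by simp
  then show zero: "\<phi> 0 = 0" by (rule add_left_imp_eq)
  show uminus: "\<phi> (- x) = - \<phi> x" for x using add[of x "- x"] zero by (simp add: eq_neg_iff_add_eq_0 add.commute)
  show "\<phi> (x - y) = \<phi> x - \<phi> y" using add[of x "- y"] uminus[of y] by simp
  show inverse: "\<phi> (inverse x) = inverse (\<phi> x)" for x
  proof (cases "x = 0")
    case False
    then have "\<phi> x * \<phi> (inverse x) = 1" using mult[of x "inverse x"] one by simp
    then show ?thesis by (rule inverse_unique[symmetric])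
  qed (simp add: zero)
  show "\<phi> (x / y) = \<phi> x / \<phi> y" by (simp add: divide_inverse mult inverse)
qed

lemma field_embedding_eq_0_iff:
  assumes "field_embedding \<phi>"
  shows "\<phi> x = 0 \<longleftrightarrow> x = 0"
  using field_embedding_hom(2)[OF assms, of x "inverse x"] field_embedding_hom(3,4)[OF assms]
  by (cases "x = 0") auto

definition gauss_eval :: "('a \<Rightarrow> 'b::comm_ring_1) \<Rightarrow> 'b \<Rightarrow> 'a \<times> 'a \<Rightarrow> 'b" where
  "gauss_eval \<phi> m z = \<phi> (fst z) + m * \<phi> (snd z)"

lemma gauss_eval_mult:
  assumes "field_embedding \<phi>" and m: "m\<^sup>2 = -1"
  shows "gauss_eval \<phi> m (gauss_mult x y) = gauss_eval \<phi> m x * gauss_eval \<phi> m y"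
proof -
  have "m * m = -1" using m by (simp add: power2_eq_square)
  then show ?thesis
    unfolding gauss_eval_def gauss_mult_def fst_conv snd_conv field_embedding_hom[OF assms(1)]
    by (simp add: algebra_simps) (simp add: mult.assoc[symmetric])
qed

lemma gauss_eval_diff:
  assumes "field_embedding \<phi>"
  shows "gauss_eval \<phi> m (x - y) = gauss_eval \<phi> m x - gauss_eval \<phi> m y"
  unfolding gauss_eval_def fst_diff snd_diff field_embedding_hom[OF assms] by (simp add: algebra_simps)

lemma gauss_eval_cheb:
  assumes emb: "field_embedding \<phi>" and m: "m\<^sup>2 = -1"
  shows "gauss_eval \<phi> m (gauss_cheb c k) = poly (cheb_poly k) (gauss_eval \<phi> m c)"
proof (induction k rule: induct_nat_012)
  case 0
  then show ?case using field_embedding_hom[OF emb] by (simp add: gauss_eval_def)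
next
  case (ge2 k)
  then show ?case by (simp add: gauss_eval_diff[OF emb] gauss_eval_mult[OF emb m])
qed simp

lemma field_embedding_gauss_norm:
  assumes "field_embedding \<phi>" and m: "m\<^sup>2 = -1"
  shows "\<phi> (gauss_norm z) = gauss_eval \<phi> m z * gauss_eval \<phi> (- m) z"
proof -
  have "m * m = -1" using m by (simp add: power2_eq_square)
  then show ?thesis
    unfolding gauss_eval_def gauss_norm_def power2_eq_square field_embedding_hom[OF assms(1)]
    by (simp add: algebra_simps) (simp add: mult.assoc[symmetric])
qed

theorem theorem2p7:
  fixes a b :: "'a::{field,finite}"
    and \<phi> :: "'a \<Rightarrow> 'b::field"
    and \<mu> \<theta> :: 'b
    and n :: nat
  assumes q_odd: "odd CARD('a)"
    and b_nz: "b \<noteq> 0"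
    and n_ge: "n \<ge> 2"
    and cop: "gcd (n + 1) CARD('a) = 1"
    and emb: "field_embedding \<phi>"
    and mu: "\<mu> ^ 2 = -1"
    and theta: "primitive_root_of_unity (2 * (n + 1)) \<theta>"
  shows "is_LCD (2 * n) (tt_code n a b) \<longleftrightarrow>
    \<phi> (a / b) \<notin> {- \<mu> / \<phi> b + \<theta> ^ i + inverse (\<theta> ^ i) | i. 1 \<le> i \<and> i \<le> n}
              \<union> {\<mu> / \<phi> b + \<theta> ^ i + inverse (\<theta> ^ i) | i. 1 \<le> i \<and> i \<le> n}"
proof -
  let ?R = "(\<lambda>i. \<theta> ^ i + inverse (\<theta> ^ i)) ` {1..n}"
  let ?c = "(- a / b, - 1 / b)"
  have mu': "(- \<mu>)\<^sup>2 = -1" using mu by simp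
  let ?S = "\<lambda>c. {c + \<theta> ^ i + inverse (\<theta> ^ i) | i. 1 \<le> i \<and> i \<le> n}"
  have shifted: "y \<in> ?S c \<longleftrightarrow> y - c \<in> ?R" for c y
    by (auto simp: diff_eq_eq ac_simps)
  have eval: "- gauss_eval \<phi> m ?c = \<phi> (a / b) + m / \<phi> b" for m
    unfolding gauss_eval_def by (simp add: field_embedding_hom[OF emb] algebra_simps)
  have "is_LCD (2 * n) (tt_code n a b) \<longleftrightarrow> gauss_norm (gauss_cheb ?c n) \<noteq> 0"
    unfolding is_LCD_tt_code_iff using toeplitz_kernel_iff_gauss_norm_eq_0[OF b_nz, of n a] n_ge by simp
  also have "\<dots> \<longleftrightarrow> \<phi> (gauss_norm (gauss_cheb ?c n)) \<noteq> 0"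
    by (simp add: field_embedding_eq_0_iff[OF emb])
  also have "\<phi> (gauss_norm (gauss_cheb ?c n)) =
      poly (cheb_poly n) (gauss_eval \<phi> \<mu> ?c) * poly (cheb_poly n) (gauss_eval \<phi> (- \<mu>) ?c)"
    by (simp add: field_embedding_gauss_norm[OF emb mu] gauss_eval_cheb[OF emb mu] gauss_eval_cheb[OF emb mu'])
  also have "\<dots> \<noteq> 0 \<longleftrightarrow> \<phi> (a / b) \<notin> ?S (- \<mu> / \<phi> b) \<union> ?S (\<mu> / \<phi> b)"
    unfolding mult_eq_0_iff poly_cheb_poly_eq_0_iff_uminus_mem[OF theta] eval Un_iff shifted by auto
  finally show ?thesis by simp
qed

end
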